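(* Let $F\subsetneq K$ be fields of characteristic $0$, with $F$ a proper nonempty subfield of $K$. Let $p(x)=\sum_{k=0}^{n}a_k x^k\in K[x]$ be non-constant with $a_n\neq 0$, and let $q(x)=\sum_{j=0}^{m}b_j x^j\in K[x]\setminus F[x]$ with $b_m\neq 0$. Suppose $a_n,b_m\in F$ and $b_j\notin F$ for some $j\geq 1$. Then $p\circ q\notin F[x]$ and $D_F(p\circ q)=D_F(q)$.
   Context: For sets $F\subset K$ and $p(x)=\sum_{k=0}^{n}a_kx^k\in K[x]$ with $a_n\neq 0$, the $F$ deficit $D_F(p)$ is defined as follows: if $p\in K[x]\setminus F[x]$, then $D_F(p)=n-\max\{0\le k\le n: a_k\notin F\}$; if $p\in F[x]$, then $D_F(p)=n$. Here $F[x]$ denotes the set of polynomials with all coefficients in $F$. *)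

theory Defs
  imports "HOL-Computational_Algebra.Polynomial"
begin

definition is_subfield :: "'k::field set \<Rightarrow> bool" where
  "is_subfield F \<longleftrightarrow> 0 \<in> F \<and> 1 \<in> F \<and>
     (\<forall>x\<in>F. \<forall>y\<in>F. x + y \<in> F \<and> x * y \<in> F) \<and>
     (\<forall>x\<in>F. - x \<in> F) \<and> (\<forall>x\<in>F. x \<noteq> 0 \<longrightarrow> inverse x \<in> F)"

definition in_polys_over :: "'k::zero poly \<Rightarrow> 'k set \<Rightarrow> bool" where
  "in_polys_over p F \<longleftrightarrow> (\<forall>k. coeff p k \<in> F)"

definition deficit :: "'k::zero set \<Rightarrow> 'k poly \<Rightarrow> nat" where
  "deficit F p = (if in_polys_over p F then degree p
                  else degree p - Max {k. k \<le> degree p \<and> coeff p k \<notin> F})"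

end

theory Submission
  imports Defs
begin

text \<open>
  Let \<open>m = deg q\<close> with leading coefficient \<open>b\<close>, and let \<open>r\<close> be the index of the highest
  coefficient of \<open>q\<close> outside \<open>F\<close>; then \<open>1 \<le> r < m\<close>. Split \<open>q = Q + R\<close> with \<open>Q \<in> F[x]\<close>
  carrying the coefficients above \<open>r\<close> and \<open>deg R = r\<close>. Then \<open>q^n - Q^n = R T\<close> with
  \<open>T = (\<Sum>i<n. Q^(n-1-i) q^i)\<close>, whose leading coefficient \<open>n b^(n-1)\<close> lies in \<open>F\<close> and is
  nonzero in characteristic 0. So the highest coefficient of \<open>q^n\<close> outside \<open>F\<close> sits at
  \<open>(n-1) m + r\<close>, and the lower terms of \<open>p \<circ> q\<close>, of degree at most \<open>(n-1) m\<close>, do not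
  reach it. Hence \<open>p \<circ> q\<close> and \<open>q\<close> both have deficit \<open>m - r\<close>.
\<close>

lemma pcompose_monom: "pcompose (monom a n) q = smult a (q ^ n)"
  by (induction n) (simp_all add: monom_Suc monom_0 pcompose_pCons pcompose_const)

lemma degree_diff_lead_monom_le: "degree (p - monom (lead_coeff p) (degree p)) \<le> degree p - 1"
proof (rule degree_le, intro allI impI)
  fix k assume "degree p - 1 < k"
  then consider "k = degree p" | "degree p < k" by linarith
  then show "coeff (p - monom (lead_coeff p) (degree p)) k = 0"
    by cases (simp_all add: coeff_eq_0)
qed

lemma power_diff_power_factor:
  fixes q Q :: "'a::idom poly"
  assumes "degree Q = degree q" and "lead_coeff Q = lead_coeff q"
  obtains T where "q ^ n - Q ^ n = (q - Q) * T" and "degree T \<le> (n - 1) * degree q"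
    and "coeff T ((n - 1) * degree q) = of_nat n * lead_coeff q ^ (n - 1)"
proof
  define T where "T = (\<Sum>i<n. Q ^ (n - Suc i) * q ^ i)"
  show "q ^ n - Q ^ n = (q - Q) * T"
    unfolding T_def by (rule power_diff_sumr2)
  have term_degree: "degree (Q ^ (n - Suc i) * q ^ i) = (n - 1) * degree q" if "i < n" for i
  proof (cases "q = 0")
    case False
    with assms have "Q \<noteq> 0" by (metis leading_coeff_0_iff)
    with False that assms show ?thesis
      by (simp add: degree_mult_eq degree_power_eq flip: add_mult_distrib)
  next
    case True
    with assms have "Q = 0" by (metis leading_coeff_0_iff)
    with True show ?thesis by (simp add: power_0_left)
  qed
  have term_lead_coeff: "lead_coeff (Q ^ (n - Suc i) * q ^ i) = lead_coeff q ^ (n - 1)"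
    if "i < n" for i
    using that assms by (simp add: lead_coeff_mult lead_coeff_power flip: power_add)
  show "degree T \<le> (n - 1) * degree q"
    unfolding T_def by (rule degree_sum_le) (simp_all add: term_degree)
  show "coeff T ((n - 1) * degree q) = of_nat n * lead_coeff q ^ (n - 1)"
    unfolding T_def coeff_sum using term_degree term_lead_coeff by simp
qed

definition top_coeff_outside :: "'a::zero set \<Rightarrow> 'a poly \<Rightarrow> nat \<Rightarrow> bool" where
  "top_coeff_outside F p e \<longleftrightarrow> coeff p e \<notin> F \<and> (\<forall>k>e. coeff p k \<in> F)"

lemma top_coeff_outside_ge: "top_coeff_outside F p e \<Longrightarrow> coeff p k \<notin> F \<Longrightarrow> k \<le> e"
  unfolding top_coeff_outside_def using not_le by blast

context
  fixes F :: "'k::field set"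
  assumes subfield: "is_subfield F"
begin

lemma subfield_zero: "0 \<in> F"
  and subfield_one: "1 \<in> F"
  and subfield_add: "x \<in> F \<Longrightarrow> y \<in> F \<Longrightarrow> x + y \<in> F"
  and subfield_mult: "x \<in> F \<Longrightarrow> y \<in> F \<Longrightarrow> x * y \<in> F"
  and subfield_uminus: "x \<in> F \<Longrightarrow> - x \<in> F"
  and subfield_inverse: "x \<in> F \<Longrightarrow> inverse x \<in> F"
  using subfield unfolding is_subfield_def by auto

lemma subfield_diff: "x \<in> F \<Longrightarrow> y \<in> F \<Longrightarrow> x - y \<in> F"
  by (metis diff_conv_add_uminus subfield_add subfield_uminus)

lemma subfield_sum: "(\<And>x. x \<in> A \<Longrightarrow> f x \<in> F) \<Longrightarrow> sum f A \<in> F"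
  by (induction A rule: infinite_finite_induct) (simp_all add: subfield_zero subfield_add)

lemma subfield_of_nat: "of_nat n \<in> F"
  by (induction n) (simp_all add: subfield_zero subfield_one subfield_add)

lemma subfield_power: "x \<in> F \<Longrightarrow> x ^ n \<in> F"
  by (induction n) (simp_all add: subfield_one subfield_mult)

lemma add_notin_subfield: "x \<in> F \<Longrightarrow> y \<notin> F \<Longrightarrow> x + y \<notin> F"
  using subfield_diff[of "x + y" x] by auto

lemma mult_notin_subfield: "x \<in> F \<Longrightarrow> x \<noteq> 0 \<Longrightarrow> y \<notin> F \<Longrightarrow> x * y \<notin> F"
  using subfield_mult[of "inverse x" "x * y"] subfield_inverse[of x] by (auto simp: field_simps)

lemma in_polys_over_mult:
  "in_polys_over p F \<Longrightarrow> in_polys_over q F \<Longrightarrow> in_polys_over (p * q) F"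
  unfolding in_polys_over_def coeff_mult by (auto intro!: subfield_sum subfield_mult)

lemma in_polys_over_power:
  assumes "in_polys_over p F" shows "in_polys_over (p ^ n) F"
proof (induction n)
  case 0
  then show ?case by (simp add: in_polys_over_def coeff_1 subfield_zero subfield_one)
next
  case (Suc n)
  then show ?case using assms by (simp add: in_polys_over_mult)
qed

lemma top_coeff_outside_le_degree:
  "top_coeff_outside F p e \<Longrightarrow> e \<le> degree p"
  using subfield_zero unfolding top_coeff_outside_def by (metis coeff_eq_0 not_le)

lemma top_coeff_outside_less_degree:
  assumes "top_coeff_outside F p e" and "lead_coeff p \<in> F"
  shows "e < degree p"
proof -
  have "e \<noteq> degree p"
    using assms unfolding top_coeff_outside_def by auto
  with top_coeff_outside_le_degree[OF assms(1)] show ?thesis by simp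
qed

lemma top_coeff_outside_exists:
  assumes "\<not> in_polys_over p F"
  obtains e where "top_coeff_outside F p e"
proof
  let ?S = "{k. coeff p k \<notin> F}"
  have "?S \<subseteq> {..degree p}"
  proof
    fix k assume "k \<in> ?S"
    then have "coeff p k \<noteq> 0" using subfield_zero by auto
    then show "k \<in> {..degree p}" by (simp add: le_degree)
  qed
  then have finite: "finite ?S" by (rule finite_subset) simp
  have "?S \<noteq> {}"
    using assms unfolding in_polys_over_def by auto
  with finite have "Max ?S \<in> ?S" by (rule Max_in)
  moreover have "k \<le> Max ?S" if "k \<in> ?S" for k
    using finite that by (rule Max_ge)
  ultimately show "top_coeff_outside F p (Max ?S)"
    unfolding top_coeff_outside_def by (auto simp flip: not_le)
qed

lemma deficit_eq_top_coeff_outside: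
  assumes "top_coeff_outside F p e"
  shows "\<not> in_polys_over p F" and "deficit F p = degree p - e"
proof -
  show "\<not> in_polys_over p F"
    using assms unfolding top_coeff_outside_def in_polys_over_def by blast
  have "Max {k. k \<le> degree p \<and> coeff p k \<notin> F} = e"
  proof (rule Max_eqI)
    show "e \<in> {k. k \<le> degree p \<and> coeff p k \<notin> F}"
      using assms top_coeff_outside_le_degree[OF assms] unfolding top_coeff_outside_def
      by simp
    show "k \<le> e" if "k \<in> {k. k \<le> degree p \<and> coeff p k \<notin> F}" for k
      using that assms top_coeff_outside_ge by blast
  qed simp
  with \<open>\<not> in_polys_over p F\<close> show "deficit F p = degree p - e"
    by (simp add: deficit_def)
qed

lemma top_coeff_outside_lead_coeff:
  "lead_coeff p \<notin> F \<Longrightarrow> top_coeff_outside F p (degree p)"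
  unfolding top_coeff_outside_def using subfield_zero by (simp add: coeff_eq_0)

lemma top_coeff_outside_add:
  assumes "top_coeff_outside F p e" and "\<And>k. e \<le> k \<Longrightarrow> coeff A k \<in> F"
  shows "top_coeff_outside F (p + A) e"
  using assms add_notin_subfield[of "coeff A e" "coeff p e"]
  unfolding top_coeff_outside_def by (auto simp: add.commute intro: subfield_add)

lemma top_coeff_outside_smult:
  assumes "top_coeff_outside F p e" and "a \<in> F" and "a \<noteq> 0"
  shows "top_coeff_outside F (smult a p) e"
  using assms mult_notin_subfield unfolding top_coeff_outside_def by (auto intro: subfield_mult)

lemma top_coeff_outside_power:
  assumes top: "top_coeff_outside F q r" and "lead_coeff q \<in> F" and "of_nat n \<noteq> (0::'k)"
  shows "top_coeff_outside F (q ^ n) ((n - 1) * degree q + r)"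
proof -
  have "r < degree q"
    using top_coeff_outside_less_degree[OF top \<open>lead_coeff q \<in> F\<close>] .
  define R where "R = poly_cutoff (Suc r) q"
  define Q where "Q = q - R"
  have coeff_Q: "coeff Q k = (if k \<le> r then 0 else coeff q k)" for k
    by (simp add: Q_def R_def coeff_poly_cutoff)
  have Q_over_F: "in_polys_over Q F"
    using top subfield_zero unfolding in_polys_over_def top_coeff_outside_def coeff_Q by simp
  have lead_R: "coeff R r \<notin> F"
    using top by (simp add: R_def coeff_poly_cutoff top_coeff_outside_def)
  then have "r \<le> degree R"
    using subfield_zero by (intro le_degree) auto
  moreover have "degree R \<le> r"
    by (rule degree_le) (simp add: R_def coeff_poly_cutoff)
  ultimately have degree_R: "degree R = r" by linarith
  have lead_Q: "coeff Q (degree q) = lead_coeff q"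
    using \<open>r < degree q\<close> by (simp add: coeff_Q)
  have "lead_coeff q \<noteq> 0"
    using \<open>r < degree q\<close> by auto
  then have "degree q \<le> degree Q"
    using lead_Q by (intro le_degree) simp
  moreover have "degree Q \<le> degree q"
    by (rule degree_le) (simp add: coeff_Q coeff_eq_0)
  ultimately have degree_Q: "degree Q = degree q" by linarith
  obtain T where factor: "q ^ n - Q ^ n = R * T" and "degree T \<le> (n - 1) * degree q"
    and coeff_T: "coeff T ((n - 1) * degree q) = of_nat n * lead_coeff q ^ (n - 1)"
    using power_diff_power_factor[of Q q n] degree_Q lead_Q by (auto simp: Q_def)
  have T_in_F: "of_nat n * lead_coeff q ^ (n - 1) \<in> F"
    using assms by (intro subfield_mult subfield_of_nat subfield_power)
  have T_nonzero: "of_nat n * lead_coeff q ^ (n - 1) \<noteq> 0"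
    using assms \<open>lead_coeff q \<noteq> 0\<close> by simp
  then have "(n - 1) * degree q \<le> degree T"
    using coeff_T by (intro le_degree) simp
  with \<open>degree T \<le> _\<close> have degree_T: "degree T = (n - 1) * degree q" by linarith
  have "lead_coeff (R * T) = coeff R r * (of_nat n * lead_coeff q ^ (n - 1))"
    using coeff_T by (simp add: lead_coeff_mult degree_R degree_T)
  then have "lead_coeff (R * T) \<notin> F"
    using mult_notin_subfield[OF T_in_F T_nonzero lead_R] by (simp add: mult.commute)
  then have "top_coeff_outside F (R * T) (degree (R * T))"
    by (rule top_coeff_outside_lead_coeff)
  moreover have "R \<noteq> 0" and "T \<noteq> 0"
    using lead_R subfield_zero T_nonzero coeff_T by auto
  ultimately have "top_coeff_outside F (R * T) ((n - 1) * degree q + r)"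
    by (simp add: degree_mult_eq degree_R degree_T add.commute)
  then have "top_coeff_outside F (R * T + Q ^ n) ((n - 1) * degree q + r)"
  proof (rule top_coeff_outside_add)
    show "coeff (Q ^ n) k \<in> F" for k
      using in_polys_over_power[OF Q_over_F] by (simp add: in_polys_over_def)
  qed
  with factor show ?thesis
    by (simp add: algebra_simps)
qed

lemma top_coeff_outside_pcompose:
  assumes top: "top_coeff_outside F q r" and "1 \<le> r" and "lead_coeff q \<in> F"
    and "lead_coeff p \<in> F" and "lead_coeff p \<noteq> 0" and "of_nat (degree p) \<noteq> (0::'k)"
  shows "top_coeff_outside F (pcompose p q) ((degree p - 1) * degree q + r)"
proof -
  define e where "e = (degree p - 1) * degree q + r"
  define p_low where "p_low = p - monom (lead_coeff p) (degree p)"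
  have "pcompose p q = pcompose (monom (lead_coeff p) (degree p) + p_low) q"
    by (simp add: p_low_def)
  also have "\<dots> = smult (lead_coeff p) (q ^ degree p) + pcompose p_low q"
    by (simp only: pcompose_add pcompose_monom)
  finally have split: "pcompose p q = smult (lead_coeff p) (q ^ degree p) + pcompose p_low q" .
  have "degree p_low * degree q \<le> (degree p - 1) * degree q"
    using degree_diff_lead_monom_le[of p] by (simp add: p_low_def)
  with \<open>1 \<le> r\<close> have "degree (pcompose p_low q) < e"
    unfolding e_def degree_pcompose by linarith
  then have low: "coeff (pcompose p_low q) k \<in> F" if "e \<le> k" for k
    using that subfield_zero by (simp add: coeff_eq_0)
  have "top_coeff_outside F (q ^ degree p) e"
    unfolding e_def using assms by (intro top_coeff_outside_power)
  then show ?thesis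
    unfolding e_def [symmetric] split using assms low
    by (intro top_coeff_outside_add top_coeff_outside_smult)
qed

end

theorem theorem2:
  fixes F :: "'k::field set" and p q :: "'k poly"
  assumes "CHAR('k) = 0"
    and "is_subfield F" and "F \<noteq> UNIV"
    and "degree p \<ge> 1"
    and "\<not> in_polys_over q F"
    and "lead_coeff p \<in> F" and "lead_coeff q \<in> F"
    and "\<exists>j\<ge>1. coeff q j \<notin> F"
  shows "\<not> in_polys_over (pcompose p q) F \<and> deficit F (pcompose p q) = deficit F q"
proof -
  note subfield = \<open>is_subfield F\<close>
  obtain r where top_q: "top_coeff_outside F q r"
    using top_coeff_outside_exists[OF subfield assms(5)] .
  have "1 \<le> r"
    using assms(8) top_coeff_outside_ge[OF top_q] by fastforce
  have "r < degree q"
    using top_coeff_outside_less_degree[OF subfield top_q assms(7)] .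
  have "of_nat (degree p) \<noteq> (0::'k)"
    using assms(1,4) CHAR_eq0_iff[where 'a = 'k] by simp
  moreover have "lead_coeff p \<noteq> 0"
    using assms(4) by auto
  ultimately have "top_coeff_outside F (pcompose p q) ((degree p - 1) * degree q + r)"
    using top_coeff_outside_pcompose[OF subfield top_q \<open>1 \<le> r\<close>] assms(6,7) by blast
  moreover have "degree p * degree q - ((degree p - 1) * degree q + r) = degree q - r"
    using assms(4) \<open>r < degree q\<close> by (cases "degree p") simp_all
  ultimately show ?thesis
    using deficit_eq_top_coeff_outside[OF subfield] top_q by (metis degree_pcompose)
qed

end
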